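(* Let $W$ be a non-negative random variable with finite mean, let $\theta>0$, and let $W^*$ have the law of $U^{1/\theta}(W+1)$, where $U\sim\mathcal U[0,1]$ is independent of $W$. Let $D_\theta$ have the generalized Dickman distribution $\mathcal D_\theta$. Then $$d_1(W,D_\theta)\le(1+\theta)\,d_1(W^*,W).$$
   Context: The generalized Dickman distribution $\mathcal D_\theta$ ($\theta>0$) is the unique law of a non-negative random variable $D_\theta$ satisfying $D_\theta=_d U^{1/\theta}(D_\theta+1)$ with $U\sim\mathcal U[0,1]$ independent of $D_\theta$. The Wasserstein distance is $d_1(X,Y)=\sup_{h\in \mathrm{Lip}_1}|Eh(X)-Eh(Y)|$, where $\mathrm{Lip}_1=\{h:|h(y)-h(x)|\le|y-x|\}$; it depends only on the laws of $X$ and $Y$. *)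

theory Defs
  imports "HOL-Probability.Probability"
begin

text \<open>Laws on the real line are represented as probability measures M with
  sets M = sets borel.\<close>

definition unif01 :: "real measure" where
  "unif01 = uniform_measure lborel {0..1}"

definition dickman_bias :: "real \<Rightarrow> real measure \<Rightarrow> real measure" where
  "dickman_bias \<theta> M = distr (M \<Otimes>\<^sub>M unif01) borel (\<lambda>(w, u). u powr (1 / \<theta>) * (w + 1))"

text \<open>D is the generalized Dickman distribution D_theta: the law of a non-negative
  random variable with D =_d U^(1/theta)(D+1).\<close>
definition is_gen_dickman :: "real \<Rightarrow> real measure \<Rightarrow> bool" where
  "is_gen_dickman \<theta> D \<longleftrightarrow> prob_space D \<and> sets D = sets borel \<and>
     (AE x in D. 0 \<le> x) \<and> dickman_bias \<theta> D = D"

definition Lip1 :: "(real \<Rightarrow> real) set" where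
  "Lip1 = {h. \<forall>x y. \<bar>h y - h x\<bar> \<le> \<bar>y - x\<bar>}"

definition wasserstein1 :: "real measure \<Rightarrow> real measure \<Rightarrow> ereal" where
  "wasserstein1 M N = (SUP h\<in>Lip1. ereal \<bar>(\<integral>x. h x \<partial>M) - (\<integral>x. h x \<partial>N)\<bar>)"

end

theory Submission
  imports Defs
begin

text \<open>For a 1-Lipschitz h and a > 0, the function x \<mapsto> h(a(x+1))/a is again 1-Lipschitz.
  Hence the map sending the law of X to the law of U^(1/\<theta>)(X+1) contracts the
  Wasserstein distance by the factor E U^(1/\<theta>) = \<theta>/(1+\<theta>). As D_\<theta> is a fixed point of this
  map, d_1(W,D_\<theta>) \<le> d_1(W,W*) + d_1(W*,D_\<theta>*) \<le> d_1(W*,W) + \<theta>/(1+\<theta>) d_1(W,D_\<theta>), which gives the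
  claim once d_1(W,D_\<theta>) is finite, i.e. once D_\<theta> has finite mean. The latter follows by applying
  the fixed-point equation to the truncations min(D_\<theta>, K).\<close>

lemma Lip1_iff_lipschitz_on: "h \<in> Lip1 \<longleftrightarrow> 1-lipschitz_on UNIV h"
  unfolding Lip1_def lipschitz_on_def dist_real_def by (auto simp: abs_minus_commute)

lemma Lip1_borel_measurable: "h \<in> Lip1 \<Longrightarrow> h \<in> borel_measurable borel"
  by (auto simp: Lip1_iff_lipschitz_on intro: borel_measurable_continuous_onI lipschitz_on_continuous_on)

lemma Lip1_abs_diff_le: "h \<in> Lip1 \<Longrightarrow> \<bar>h x - h y\<bar> \<le> \<bar>x - y\<bar>"
  unfolding Lip1_def by blast

lemma Lip1_abs_le:
  assumes "h \<in> Lip1" shows "\<bar>h x\<bar> \<le> \<bar>h 0\<bar> + \<bar>x\<bar>"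
  using Lip1_abs_diff_le[OF assms, of x 0] by linarith

lemma Lip1_rescale:
  assumes h: "h \<in> Lip1" and a: "a > 0"
  shows "(\<lambda>x. h (a * (x + b)) / a) \<in> Lip1"
  unfolding Lip1_def
proof (intro CollectI allI)
  fix x y :: real
  have "\<bar>h (a * (y + b)) - h (a * (x + b))\<bar> \<le> a * \<bar>y - x\<bar>"
    using Lip1_abs_diff_le[OF h, of "a * (y + b)" "a * (x + b)"] a
    by (simp add: abs_mult right_diff_distrib[symmetric])
  then show "\<bar>h (a * (y + b)) / a - h (a * (x + b)) / a\<bar> \<le> \<bar>y - x\<bar>"
    using a by (simp add: diff_divide_distrib[symmetric] divide_le_eq mult.commute)
qed

lemma integrable_Lip1:
  assumes "finite_measure M" "sets M = sets borel" "integrable M (\<lambda>x. x)" "h \<in> Lip1"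
  shows "integrable M h"
proof (rule Bochner_Integration.integrable_bound)
  interpret finite_measure M by fact
  show "integrable M (\<lambda>x. \<bar>h 0\<bar> + \<bar>x\<bar>)"
    using assms(3) by (intro Bochner_Integration.integrable_add integrable_abs) auto
  show "h \<in> borel_measurable M"
    using Lip1_borel_measurable[OF assms(4)] measurable_cong_sets[OF assms(2) refl] by blast
  show "AE x in M. norm (h x) \<le> norm (\<bar>h 0\<bar> + \<bar>x\<bar>)"
  proof (rule AE_I2)
    fix x
    have "\<bar>h x\<bar> \<le> \<bar>h 0\<bar> + \<bar>x\<bar>" by (rule Lip1_abs_le[OF assms(4)])
    then show "norm (h x) \<le> norm (\<bar>h 0\<bar> + \<bar>x\<bar>)" by simp
  qed
qed

lemma integrable_bounded_real:
  fixes f :: "real \<Rightarrow> real"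
  assumes "finite_measure M" "sets M = sets borel" "f \<in> borel_measurable borel" "\<And>x. \<bar>f x\<bar> \<le> K"
  shows "integrable M f"
proof (rule Bochner_Integration.integrable_bound[where f="\<lambda>_. K"])
  interpret finite_measure M by fact
  show "integrable M (\<lambda>_. K)" by simp
  show "f \<in> borel_measurable M"
    using assms(3) measurable_cong_sets[OF assms(2) refl] by blast
  show "AE x in M. norm (f x) \<le> norm K"
    using assms(4) by (intro AE_I2) (metis abs_ge_self order_trans real_norm_def)
qed

lemma abs_integral_Lip1_le:
  assumes "prob_space M" "sets M = sets borel" "integrable M (\<lambda>x. x)" "h \<in> Lip1"
  shows "\<bar>(\<integral>x. h x \<partial>M) - h 0\<bar> \<le> (\<integral>x. \<bar>x\<bar> \<partial>M)"
proof -
  interpret prob_space M by fact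
  have "integrable M h"
    by (rule integrable_Lip1[OF finite_measure_axioms assms(2-4)])
  then have "\<bar>(\<integral>x. h x \<partial>M) - h 0\<bar> = \<bar>\<integral>x. h x - h 0 \<partial>M\<bar>"
    by (simp add: prob_space)
  also have "\<dots> \<le> (\<integral>x. \<bar>h x - h 0\<bar> \<partial>M)"
    by (rule integral_abs_bound)
  also have "\<dots> \<le> (\<integral>x. \<bar>x\<bar> \<partial>M)"
    using \<open>integrable M h\<close> assms(3) Lip1_abs_diff_le[OF assms(4), of _ 0]
    by (intro integral_mono) auto
  finally show ?thesis .
qed

lemma wasserstein1_ge:
  "h \<in> Lip1 \<Longrightarrow> ereal \<bar>(\<integral>x. h x \<partial>M) - (\<integral>x. h x \<partial>N)\<bar> \<le> wasserstein1 M N"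
  unfolding wasserstein1_def by (rule SUP_upper)

lemma wasserstein1_nonneg: "0 \<le> wasserstein1 M N"
proof -
  have "0 \<le> ereal \<bar>(\<integral>x. x \<partial>M) - (\<integral>x. x \<partial>N)\<bar>"
    by simp
  also have "\<dots> \<le> wasserstein1 M N"
    by (rule wasserstein1_ge) (simp add: Lip1_def)
  finally show ?thesis .
qed

lemma wasserstein1_commute: "wasserstein1 M N = wasserstein1 N M"
  unfolding wasserstein1_def by (simp add: abs_minus_commute)

lemma wasserstein1_triangle: "wasserstein1 M N \<le> wasserstein1 M L + wasserstein1 L N"
proof (unfold wasserstein1_def[of M N], rule SUP_least)
  fix h assume h: "h \<in> Lip1"
  have "ereal \<bar>(\<integral>x. h x \<partial>M) - (\<integral>x. h x \<partial>N)\<bar>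
      \<le> ereal \<bar>(\<integral>x. h x \<partial>M) - (\<integral>x. h x \<partial>L)\<bar> + ereal \<bar>(\<integral>x. h x \<partial>L) - (\<integral>x. h x \<partial>N)\<bar>"
    by simp
  also have "\<dots> \<le> wasserstein1 M L + wasserstein1 L N"
    using h by (intro add_mono wasserstein1_ge)
  finally show "ereal \<bar>(\<integral>x. h x \<partial>M) - (\<integral>x. h x \<partial>N)\<bar> \<le> wasserstein1 M L + wasserstein1 L N" .
qed

lemma wasserstein1_le_abs_moments:
  assumes "prob_space M" "sets M = sets borel" "integrable M (\<lambda>x. x)"
    and "prob_space N" "sets N = sets borel" "integrable N (\<lambda>x. x)"
  shows "wasserstein1 M N \<le> ereal ((\<integral>x. \<bar>x\<bar> \<partial>M) + (\<integral>x. \<bar>x\<bar> \<partial>N))"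
  unfolding wasserstein1_def
proof (rule SUP_least)
  fix h assume "h \<in> Lip1"
  then show "ereal \<bar>(\<integral>x. h x \<partial>M) - (\<integral>x. h x \<partial>N)\<bar> \<le> ereal ((\<integral>x. \<bar>x\<bar> \<partial>M) + (\<integral>x. \<bar>x\<bar> \<partial>N))"
    using abs_integral_Lip1_le[OF assms(1-3)] abs_integral_Lip1_le[OF assms(4-6)] by force
qed

lemma prob_space_unif01: "prob_space unif01"
  unfolding unif01_def by (rule prob_space_uniform_measure) auto

lemma sets_unif01 [measurable_cong]: "sets unif01 = sets borel"
  unfolding unif01_def by simp

lemma space_unif01 [simp]: "space unif01 = UNIV"
  unfolding unif01_def by simp

lemma AE_unif01: "AE u in unif01. 0 \<le> u \<and> u \<le> 1"
  unfolding unif01_def by (rule AE_uniform_measureI) auto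

lemma unif01_powr:
  assumes p: "0 \<le> p"
  shows "integrable unif01 (\<lambda>u. u powr p)"
    and "(\<integral>u. u powr p \<partial>unif01) = 1 / (p + 1)"
proof -
  interpret prob_space unif01 by (rule prob_space_unif01)
  show "integrable unif01 (\<lambda>u. u powr p)"
  proof (rule Bochner_Integration.integrable_bound[where f="\<lambda>_. 1::real"])
    show "AE u in unif01. norm (u powr p) \<le> norm (1::real)"
      using AE_unif01 by eventually_elim (use p powr_le1 in auto)
  qed auto
  have "((\<lambda>u. u powr p) has_integral (1 / (p + 1))) {0..1}"
    using has_integral_powr_from_0[of p 1] p by simp
  then have "(\<integral>\<^sup>+u. ennreal (u powr p) * indicator {0..1} u \<partial>lborel) = ennreal (1 / (p + 1))"
    by (intro nn_integral_has_integral_lebesgue') auto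
  then have "(\<integral>\<^sup>+u. ennreal (u powr p) \<partial>unif01) = ennreal (1 / (p + 1))"
    unfolding unif01_def by (subst nn_integral_uniform_measure) (auto simp: divide_ennreal_def)
  then show "(\<integral>u. u powr p \<partial>unif01) = 1 / (p + 1)"
    using p by (subst integral_eq_nn_integral) auto
qed

lemma AE_pair_unif01:
  assumes "sigma_finite_measure M"
  shows "AE p in M \<Otimes>\<^sub>M unif01. 0 \<le> snd p \<and> snd p \<le> 1"
proof -
  interpret pair_sigma_finite M unif01
    by (intro pair_sigma_finite.intro assms prob_space_imp_sigma_finite prob_space_unif01)
  show ?thesis
    by (rule AE_pair_measure) (use AE_unif01 in simp_all)
qed

lemma integrable_dickman_bias_kernel:
  assumes \<theta>: "0 < \<theta>" and M: "prob_space M" "sets M = sets borel"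
    and h: "h \<in> borel_measurable borel" and B: "0 \<le> B"
    and growth: "\<And>x. \<bar>h x\<bar> \<le> A + B * \<bar>x\<bar>" and iM: "integrable M (\<lambda>x. B * \<bar>x\<bar>)"
  shows "integrable (M \<Otimes>\<^sub>M unif01) (\<lambda>(w, u). h (u powr (1 / \<theta>) * (w + 1)))"
proof -
  interpret M: prob_space M by fact
  interpret U: prob_space unif01 by (rule prob_space_unif01)
  interpret pair_prob_space M unif01 ..
  note [measurable_cong] = M(2) and [measurable] = h
  have "integrable (M \<Otimes>\<^sub>M unif01) (\<lambda>p. A + B * (\<bar>fst p\<bar> + 1))"
  proof (rule Fubini_integrable)
    have "integrable M (\<lambda>x. \<bar>A + B * (\<bar>x\<bar> + 1)\<bar>)"
      using iM by (intro integrable_abs) (simp add: distrib_left add.assoc[symmetric])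
    then show "integrable M (\<lambda>x. \<integral>y. norm (A + B * (\<bar>fst (x, y)\<bar> + 1)) \<partial>unif01)"
      by simp
  qed auto
  then show ?thesis
  proof (rule Bochner_Integration.integrable_bound)
    show "AE p in M \<Otimes>\<^sub>M unif01.
        norm ((\<lambda>(w, u). h (u powr (1 / \<theta>) * (w + 1))) p) \<le> norm (A + B * (\<bar>fst p\<bar> + 1))"
      using AE_pair_unif01[OF M.sigma_finite_measure_axioms]
    proof eventually_elim
      case (elim p)
      obtain w u where p: "p = (w, u)" by force
      have "\<bar>u powr (1 / \<theta>) * (w + 1)\<bar> \<le> 1 * (\<bar>w\<bar> + 1)"
        unfolding abs_mult using elim p \<theta>
        by (intro mult_mono) (auto simp: powr_le1)
      then have "\<bar>h (u powr (1 / \<theta>) * (w + 1))\<bar> \<le> A + B * (\<bar>w\<bar> + 1)"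
        using growth[of "u powr (1 / \<theta>) * (w + 1)"] mult_left_mono[OF _ B] by force
      then show ?case
        using p by simp
    qed
  qed measurable
qed

lemma integral_dickman_bias:
  fixes h :: "real \<Rightarrow> real"
  assumes M: "prob_space M" "sets M = sets borel" and h: "h \<in> borel_measurable borel"
    and ih: "integrable (M \<Otimes>\<^sub>M unif01) (\<lambda>(w, u). h (u powr (1 / \<theta>) * (w + 1)))"
  shows "integrable unif01 (\<lambda>u. \<integral>w. h (u powr (1 / \<theta>) * (w + 1)) \<partial>M)"
    and "(\<integral>x. h x \<partial>dickman_bias \<theta> M) = (\<integral>u. (\<integral>w. h (u powr (1 / \<theta>) * (w + 1)) \<partial>M) \<partial>unif01)"
proof -
  interpret M: prob_space M by fact
  interpret U: prob_space unif01 by (rule prob_space_unif01)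
  interpret pair_prob_space M unif01 ..
  note [measurable_cong] = M(2) and [measurable] = h
  show "integrable unif01 (\<lambda>u. \<integral>w. h (u powr (1 / \<theta>) * (w + 1)) \<partial>M)"
    using integrable_snd[of "\<lambda>w u. h (u powr (1 / \<theta>) * (w + 1))"] ih by simp
  have "(\<integral>x. h x \<partial>dickman_bias \<theta> M)
      = (\<integral>p. (\<lambda>(w, u). h (u powr (1 / \<theta>) * (w + 1))) p \<partial>(M \<Otimes>\<^sub>M unif01))"
    unfolding dickman_bias_def by (subst integral_distr) (auto simp: case_prod_unfold)
  also have "\<dots> = (\<integral>u. (\<integral>w. h (u powr (1 / \<theta>) * (w + 1)) \<partial>M) \<partial>unif01)"
    using integral_snd[of "\<lambda>w u. h (u powr (1 / \<theta>) * (w + 1))"] ih by simp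
  finally show "(\<integral>x. h x \<partial>dickman_bias \<theta> M) = (\<integral>u. (\<integral>w. h (u powr (1 / \<theta>) * (w + 1)) \<partial>M) \<partial>unif01)" .
qed

lemma min_scaled_shift_le:
  fixes a w K :: real
  assumes "0 \<le> a" "a \<le> 1" "0 \<le> w" "0 \<le> K"
  shows "min (a * (w + 1)) K \<le> a + min w K - (1 - a) * (if w \<le> K then w else 0)"
  using assms by (cases "w \<le> K") (auto simp: algebra_simps)

lemma integral_min_scaled_shift_le:
  fixes D :: "real measure"
  assumes D: "prob_space D" "sets D = sets borel" "AE x in D. 0 \<le> x"
    and a: "0 \<le> a" "a \<le> 1" and K: "0 \<le> K"
  shows "(\<integral>w. min \<bar>a * (w + 1)\<bar> K \<partial>D)
    \<le> a + (\<integral>x. min \<bar>x\<bar> K \<partial>D) - (1 - a) * (\<integral>x. (if \<bar>x\<bar> \<le> K then \<bar>x\<bar> else 0) \<partial>D)"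
proof -
  interpret prob_space D by fact
  have imin: "integrable D (\<lambda>x. min \<bar>x\<bar> K)"
    by (rule integrable_bounded_real[OF finite_measure_axioms D(2), where K=K]) (use K in auto)
  have itr: "integrable D (\<lambda>x. if \<bar>x\<bar> \<le> K then \<bar>x\<bar> else 0)"
    by (rule integrable_bounded_real[OF finite_measure_axioms D(2), where K=K]) (use K in auto)
  have "(\<integral>w. min \<bar>a * (w + 1)\<bar> K \<partial>D)
      \<le> (\<integral>w. a + min \<bar>w\<bar> K - (1 - a) * (if \<bar>w\<bar> \<le> K then \<bar>w\<bar> else 0) \<partial>D)"
  proof (rule integral_mono_AE)
    show "integrable D (\<lambda>w. min \<bar>a * (w + 1)\<bar> K)"
      by (rule integrable_bounded_real[OF finite_measure_axioms D(2), where K=K]) (use K in auto)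
    show "integrable D (\<lambda>w. a + min \<bar>w\<bar> K - (1 - a) * (if \<bar>w\<bar> \<le> K then \<bar>w\<bar> else 0))"
      using imin itr by simp
    show "AE w in D. min \<bar>a * (w + 1)\<bar> K \<le> a + min \<bar>w\<bar> K - (1 - a) * (if \<bar>w\<bar> \<le> K then \<bar>w\<bar> else 0)"
      using D(3)
    proof eventually_elim
      case (elim w)
      have "\<bar>a * (w + 1)\<bar> = a * (w + 1)" "\<bar>w\<bar> = w"
        using a elim by auto
      then show ?case
        using min_scaled_shift_le[OF a elim K] by (simp only:)
    qed
  qed
  also have "\<dots> = a + (\<integral>x. min \<bar>x\<bar> K \<partial>D) - (1 - a) * (\<integral>x. (if \<bar>x\<bar> \<le> K then \<bar>x\<bar> else 0) \<partial>D)"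
    using imin itr by (simp add: prob_space)
  finally show ?thesis .
qed

text \<open>Integrating the bound above against the fixed-point equation, E min(D_\<theta>, K) cancels and
  leaves (1 - c) E[D_\<theta>; D_\<theta> \<le> K] \<le> c with c = E U^(1/\<theta>) = \<theta>/(1+\<theta>).\<close>

lemma gen_dickman_truncated_mean_le:
  assumes \<theta>: "0 < \<theta>" and D: "is_gen_dickman \<theta> D" and K: "0 \<le> K"
  shows "(\<integral>x. (if \<bar>x\<bar> \<le> K then \<bar>x\<bar> else 0) \<partial>D) \<le> \<theta>"
proof -
  have P: "prob_space D" and S: "sets D = sets borel" and nn: "AE x in D. 0 \<le> x"
    and fixed: "dickman_bias \<theta> D = D" using D unfolding is_gen_dickman_def by auto
  interpret U: prob_space unif01 by (rule prob_space_unif01)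
  let ?a = "\<lambda>u::real. u powr (1 / \<theta>)"
  define m where "m = (\<integral>x. min \<bar>x\<bar> K \<partial>D)"
  define t where "t = (\<integral>x. (if \<bar>x\<bar> \<le> K then \<bar>x\<bar> else 0) \<partial>D)"
  define c where "c = 1 / (1 / \<theta> + 1)"
  have c: "integrable unif01 ?a" "(\<integral>u. ?a u \<partial>unif01) = c"
    using unif01_powr[of "1 / \<theta>"] \<theta> by (auto simp: c_def)
  have kernel: "integrable (D \<Otimes>\<^sub>M unif01) (\<lambda>(w, u). min \<bar>?a u * (w + 1)\<bar> K)"
    using K by (intro integrable_dickman_bias_kernel[OF \<theta> P S, where A=K and B=0]) auto
  have "(\<lambda>x::real. min \<bar>x\<bar> K) \<in> borel_measurable borel"
    by measurable
  note bias = integral_dickman_bias[OF P S this kernel]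
  have inner: "AE u in unif01. (\<integral>w. min \<bar>?a u * (w + 1)\<bar> K \<partial>D) \<le> ?a u + m - (1 - ?a u) * t"
    using AE_unif01
  proof eventually_elim
    case (elim u)
    then have "0 \<le> ?a u" "?a u \<le> 1"
      using \<theta> by (auto simp: powr_le1)
    then show ?case
      unfolding m_def t_def by (rule integral_min_scaled_shift_le[OF P S nn _ _ K])
  qed
  have "m = (\<integral>x. min \<bar>x\<bar> K \<partial>dickman_bias \<theta> D)"
    by (simp add: fixed m_def)
  also have "\<dots> = (\<integral>u. (\<integral>w. min \<bar>?a u * (w + 1)\<bar> K \<partial>D) \<partial>unif01)"
    by (rule bias(2))
  also have "\<dots> \<le> (\<integral>u. ?a u + m - (1 - ?a u) * t \<partial>unif01)"
    using bias(1) inner c(1) by (intro integral_mono_AE) auto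
  also have "\<dots> = c + m - (1 - c) * t"
    using c U.prob_space by (simp add: algebra_simps)
  finally have "(1 - c) * t \<le> c"
    by simp
  moreover have "1 - c = 1 / (1 + \<theta>)" "c = \<theta> / (1 + \<theta>)"
    using \<theta> by (simp_all add: c_def field_simps)
  ultimately have "t / (1 + \<theta>) \<le> \<theta> / (1 + \<theta>)"
    by simp
  then show ?thesis
    using \<theta> by (simp add: t_def divide_le_cancel)
qed

lemma integrable_gen_dickman:
  assumes \<theta>: "0 < \<theta>" and D: "is_gen_dickman \<theta> D"
  shows "integrable D (\<lambda>x. x)"
proof -
  have P: "prob_space D" and S: "sets D = sets borel"
    using D unfolding is_gen_dickman_def by auto
  interpret D: prob_space D by (rule P)
  note [measurable_cong] = S
  define g where "g n x = ennreal (if \<bar>x\<bar> \<le> real n then \<bar>x\<bar> else 0)" for n :: nat and x :: real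
  have g_le: "integral\<^sup>N D (g n) \<le> ennreal \<theta>" for n
  proof -
    have "integrable D (\<lambda>x. if \<bar>x\<bar> \<le> real n then \<bar>x\<bar> else 0)"
      by (rule integrable_bounded_real[OF D.finite_measure_axioms S, where K="real n"]) auto
    then have "integral\<^sup>N D (g n) = ennreal (\<integral>x. (if \<bar>x\<bar> \<le> real n then \<bar>x\<bar> else 0) \<partial>D)"
      unfolding g_def by (rule nn_integral_eq_integral) auto
    also have "\<dots> \<le> ennreal \<theta>"
      by (intro ennreal_leI gen_dickman_truncated_mean_le[OF \<theta> D]) auto
    finally show ?thesis .
  qed
  have inc: "incseq g"
    by (auto simp: g_def incseq_def le_fun_def intro!: ennreal_leI)
  have meas: "g n \<in> borel_measurable D" for n
    unfolding g_def by measurable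
  have g_SUP: "(SUP n. g n x) = ennreal \<bar>x\<bar>" for x
  proof (rule antisym)
    show "(SUP n. g n x) \<le> ennreal \<bar>x\<bar>"
      by (rule SUP_least) (auto simp: g_def intro!: ennreal_leI)
    have "g (nat \<lceil>\<bar>x\<bar>\<rceil>) x = ennreal \<bar>x\<bar>"
      unfolding g_def by (simp add: real_nat_ceiling_ge)
    then show "ennreal \<bar>x\<bar> \<le> (SUP n. g n x)"
      by (metis SUP_upper UNIV_I)
  qed
  have "(\<integral>\<^sup>+x. ennreal \<bar>x\<bar> \<partial>D) = (SUP n. integral\<^sup>N D (g n))"
    unfolding g_SUP[symmetric] by (rule nn_integral_monotone_convergence_SUP[OF inc meas])
  also have "\<dots> \<le> ennreal \<theta>"
    by (rule SUP_least) (rule g_le)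
  finally show ?thesis
    by (intro integrableI_bounded) (auto simp: top.not_eq_extremum intro: le_less_trans)
qed

lemma integral_dickman_bias_Lip1:
  assumes \<theta>: "0 < \<theta>" and M: "prob_space M" "sets M = sets borel" "integrable M (\<lambda>x. x)"
    and h: "h \<in> Lip1"
  shows "integrable unif01 (\<lambda>u. \<integral>w. h (u powr (1 / \<theta>) * (w + 1)) \<partial>M)"
    and "(\<integral>x. h x \<partial>dickman_bias \<theta> M) = (\<integral>u. (\<integral>w. h (u powr (1 / \<theta>) * (w + 1)) \<partial>M) \<partial>unif01)"
proof -
  have "integrable (M \<Otimes>\<^sub>M unif01) (\<lambda>(w, u). h (u powr (1 / \<theta>) * (w + 1)))"
    using M(3) Lip1_abs_le[OF h]
    by (intro integrable_dickman_bias_kernel[OF \<theta> M(1,2) Lip1_borel_measurable[OF h], where B=1]) auto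
  then show "integrable unif01 (\<lambda>u. \<integral>w. h (u powr (1 / \<theta>) * (w + 1)) \<partial>M)"
    and "(\<integral>x. h x \<partial>dickman_bias \<theta> M) = (\<integral>u. (\<integral>w. h (u powr (1 / \<theta>) * (w + 1)) \<partial>M) \<partial>unif01)"
    using integral_dickman_bias[OF M(1,2) Lip1_borel_measurable[OF h]] by auto
qed

lemma abs_integral_rescaled_Lip1_le:
  assumes M: "prob_space M" and N: "prob_space N" and h: "h \<in> Lip1" and a: "0 \<le> a"
    and r: "wasserstein1 M N \<le> ereal r"
  shows "\<bar>(\<integral>x. h (a * (x + b)) \<partial>M) - (\<integral>x. h (a * (x + b)) \<partial>N)\<bar> \<le> a * r"
proof (cases "a = 0")
  case True
  then show ?thesis
    using prob_space.prob_space[OF M] prob_space.prob_space[OF N] by simp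
next
  case False
  with a have "0 < a" by simp
  have "ereal \<bar>(\<integral>x. h (a * (x + b)) / a \<partial>M) - (\<integral>x. h (a * (x + b)) / a \<partial>N)\<bar> \<le> ereal r"
    using wasserstein1_ge[OF Lip1_rescale[OF h \<open>0 < a\<close>]] r by (rule order_trans)
  then have "\<bar>(\<integral>x. h (a * (x + b)) \<partial>M) - (\<integral>x. h (a * (x + b)) \<partial>N)\<bar> / a \<le> r"
    using \<open>0 < a\<close> by (simp add: diff_divide_distrib[symmetric])
  then show ?thesis
    using \<open>0 < a\<close> by (simp add: divide_le_eq mult.commute)
qed

lemma wasserstein1_dickman_bias_le:
  assumes \<theta>: "0 < \<theta>"
    and M: "prob_space M" "sets M = sets borel" "integrable M (\<lambda>x. x)"
    and N: "prob_space N" "sets N = sets borel" "integrable N (\<lambda>x. x)"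
  shows "wasserstein1 (dickman_bias \<theta> M) (dickman_bias \<theta> N) \<le> ereal (\<theta> / (1 + \<theta>)) * wasserstein1 M N"
proof -
  interpret U: prob_space unif01 by (rule prob_space_unif01)
  obtain r where r: "wasserstein1 M N = ereal r"
    using wasserstein1_le_abs_moments[OF M N] wasserstein1_nonneg[of M N]
    by (cases "wasserstein1 M N") auto
  let ?a = "\<lambda>u::real. u powr (1 / \<theta>)"
  have ia: "integrable unif01 ?a" and Ea: "(\<integral>u. ?a u \<partial>unif01) = \<theta> / (1 + \<theta>)"
    using unif01_powr[of "1 / \<theta>"] \<theta> by (auto simp: field_simps)
  have "wasserstein1 (dickman_bias \<theta> M) (dickman_bias \<theta> N) \<le> ereal (\<theta> / (1 + \<theta>) * r)"
    unfolding wasserstein1_def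
  proof (rule SUP_least)
    fix h assume h: "h \<in> Lip1"
    define F where "F L u = (\<integral>w. h (?a u * (w + 1)) \<partial>L)" for L u
    note FM = integral_dickman_bias_Lip1[OF \<theta> M h, folded F_def]
      and FN = integral_dickman_bias_Lip1[OF \<theta> N h, folded F_def]
    have "\<bar>(\<integral>x. h x \<partial>dickman_bias \<theta> M) - (\<integral>x. h x \<partial>dickman_bias \<theta> N)\<bar> = \<bar>\<integral>u. F M u - F N u \<partial>unif01\<bar>"
      using FM FN by simp
    also have "\<dots> \<le> (\<integral>u. \<bar>F M u - F N u\<bar> \<partial>unif01)"
      by (rule integral_abs_bound)
    also have "\<dots> \<le> (\<integral>u. ?a u * r \<partial>unif01)"
      using AE_unif01 FM(1) FN(1) ia r
      by (intro integral_mono_AE) (auto simp: F_def intro!: abs_integral_rescaled_Lip1_le M(1) N(1) h)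
    also have "\<dots> = \<theta> / (1 + \<theta>) * r"
      using Ea by simp
    finally show "ereal \<bar>(\<integral>x. h x \<partial>dickman_bias \<theta> M) - (\<integral>x. h x \<partial>dickman_bias \<theta> N)\<bar> \<le> ereal (\<theta> / (1 + \<theta>) * r)"
      by simp
  qed
  then show ?thesis
    using r by simp
qed

theorem theorem1p5:
  fixes \<theta> :: real and W D :: "real measure"
  assumes "\<theta> > 0"
    and "prob_space W" and "sets W = sets borel"
    and "AE x in W. 0 \<le> x" and "integrable W (\<lambda>x. x)"
    and "is_gen_dickman \<theta> D"
  shows "wasserstein1 W D \<le> ereal (1 + \<theta>) * wasserstein1 (dickman_bias \<theta> W) W"
proof -
  note W = assms(2,3,5)
  have D: "prob_space D" "sets D = sets borel" "integrable D (\<lambda>x. x)"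
    and fixed: "dickman_bias \<theta> D = D"
    using assms(6) integrable_gen_dickman[OF assms(1,6)] unfolding is_gen_dickman_def by auto
  obtain d where d: "wasserstein1 W D = ereal d"
    using wasserstein1_le_abs_moments[OF W D] wasserstein1_nonneg[of W D]
    by (cases "wasserstein1 W D") auto
  have "wasserstein1 W D \<le> wasserstein1 W (dickman_bias \<theta> W) + wasserstein1 (dickman_bias \<theta> W) (dickman_bias \<theta> D)"
    using wasserstein1_triangle fixed by metis
  also have "\<dots> \<le> wasserstein1 (dickman_bias \<theta> W) W + ereal (\<theta> / (1 + \<theta>)) * wasserstein1 W D"
    using wasserstein1_dickman_bias_le[OF assms(1) W D] wasserstein1_commute[of W "dickman_bias \<theta> W"]
    by (intro add_mono) simp_all
  finally have "ereal d \<le> wasserstein1 (dickman_bias \<theta> W) W + ereal (\<theta> / (1 + \<theta>) * d)"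
    using d by simp
  then show ?thesis
    using d assms(1) wasserstein1_nonneg[of "dickman_bias \<theta> W" W]
    by (cases "wasserstein1 (dickman_bias \<theta> W) W") (auto simp: field_simps)
qed

end
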